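(* Let $G$ be a finite set and let $\|\cdot\|$ be a quasi-algebra predual norm on $\mathbb{R}^G$ with respect to a convex compact set $\mathcal{F}\subseteq\mathbb{R}^G$, with associated functions $c,C$ and operator $\mathcal{D}$. If $\psi\in\mathbb{R}^G$ satisfies $\|\psi\|^*_{BAC}\le1$, then $\|\psi^m\|^*\le C(m)$ for every $m\ge1$.
   Context: $\mathbb{R}^G$ carries the inner product $\langle f,g\rangle=\mathbb{E}_{x\in G}f(x)g(x)$; $\psi^m$ is the pointwise power. A norm $\|\cdot\|$ on $\mathbb{R}^G$ is quasi-algebra predual with respect to a convex compact $\mathcal{F}$ if there are $c:\mathbb{R}^+\to\mathbb{R}^+$, $C:\mathbb{Z}^+\to\mathbb{R}^+$ and an operator $\mathcal{D}:\mathbb{R}^G\to\mathbb{R}^G$ such that: (1) $\langle f,\mathcal{D}f\rangle\le1$ for $f\in\mathcal{F}$; (2) $\langle f,\mathcal{D}f\rangle\ge c(\epsilon)$ for $f\in\mathcal{F}$ with $\|f\|\ge\epsilon$; (3) $\|\mathcal{D}f_1\cdots\mathcal{D}f_m\|^*\le C(m)$ for $f_1,\dots,f_m\in\mathcal{F}$, where $\|g\|^*=\sup\{|\langle g,h\rangle|:\|h\|\le1\}$; (4) $\{\mathcal{D}f:f\in\mathcal{F}\}$ is compact and spans $\mathbb{R}^G$. $\|g\|_{BAC}=\max\{|\langle g,\mathcal{D}f\rangle|:f\in\mathcal{F}\}$ and $\|\cdot\|^*_{BAC}$ is its dual norm. *)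

theory Defs
  imports "HOL-Analysis.Analysis"
begin

text \<open>R^G is modelled as real^'g with 'g a finite type (the finite set G).\<close>

definition ip :: "real^'g \<Rightarrow> real^'g \<Rightarrow> real" where
  "ip f g = (\<Sum>x\<in>UNIV. f$x * g$x) / real CARD('g)"

definition ppow :: "real^'g \<Rightarrow> nat \<Rightarrow> real^'g" where
  "ppow \<psi> m = (\<chi> x. (\<psi>$x) ^ m)"

definition is_norm :: "(real^'g \<Rightarrow> real) \<Rightarrow> bool" where
  "is_norm N \<longleftrightarrow> (\<forall>f. N f \<ge> 0) \<and> (\<forall>f. N f = 0 \<longleftrightarrow> f = 0)
     \<and> (\<forall>f g. N (f + g) \<le> N f + N g) \<and> (\<forall>a f. N (a *\<^sub>R f) = \<bar>a\<bar> * N f)"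

definition dual_norm :: "(real^'g \<Rightarrow> real) \<Rightarrow> real^'g \<Rightarrow> real" where
  "dual_norm N g = Sup {\<bar>ip g h\<bar> | h. N h \<le> 1}"

definition quasi_algebra_predual ::
  "(real^'g \<Rightarrow> real) \<Rightarrow> (real^'g) set \<Rightarrow> (real \<Rightarrow> real) \<Rightarrow> (nat \<Rightarrow> real)
     \<Rightarrow> (real^'g \<Rightarrow> real^'g) \<Rightarrow> bool" where
  "quasi_algebra_predual N F c C D \<longleftrightarrow>
     (\<forall>\<epsilon>>0. c \<epsilon> > 0) \<and> (\<forall>m\<ge>1. C m > 0) \<and>
     (\<forall>f\<in>F. ip f (D f) \<le> 1) \<and>
     (\<forall>\<epsilon>>0. \<forall>f\<in>F. N f \<ge> \<epsilon> \<longrightarrow> ip f (D f) \<ge> c \<epsilon>) \<and>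
     (\<forall>m\<ge>1. \<forall>fs :: nat \<Rightarrow> real^'g. (\<forall>i<m. fs i \<in> F) \<longrightarrow>
         dual_norm N (\<chi> x. \<Prod>i<m. (D (fs i))$x) \<le> C m) \<and>
     compact (D ` F) \<and> span (D ` F) = UNIV"

definition bac_norm :: "(real^'g) set \<Rightarrow> (real^'g \<Rightarrow> real^'g) \<Rightarrow> real^'g \<Rightarrow> real" where
  "bac_norm F D g = Sup ((\<lambda>f. \<bar>ip g (D f)\<bar>) ` F)"

end

theory Submission
  imports Defs
begin

text \<open>
  If \<open>\<parallel>\<psi>\<parallel>\<^sup>*\<^sub>B\<^sub>A\<^sub>C \<le> 1\<close> then \<open>\<psi>\<close> lies in the closed absolutely convex hull of
  \<open>D(F)\<close>: otherwise a separating hyperplane yields an \<open>h\<close> of BAC norm at most 1 with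
  \<open>\<langle>\<psi>, h\<rangle> > 1\<close>. Pointwise multiplication is bilinear, so \<open>\<psi>\<^sup>m\<close> then lies in the
  convex hull of the signed products \<open>\<plusminus>D f\<^sub>1 \<cdots> D f\<^sub>m\<close>, each of which has dual norm at most
  \<open>C(m)\<close> by the quasi-algebra property; the dual norm is convex, so the bound passes to \<open>\<psi>\<^sup>m\<close>.
\<close>

lemma ip_inner:
  fixes f g :: "real^'g"
  shows "ip f g = inner f g / real CARD('g)"
  unfolding ip_def inner_vec_def inner_real_def by (simp add: mult.commute)

lemma ip_add_left:
  fixes f g h :: "real^'g"
  shows "ip (f + g) h = ip f h + ip g h"
  by (simp add: ip_inner inner_add_left add_divide_distrib)

lemma ip_scaleR_left:
  fixes f h :: "real^'g"
  shows "ip (a *\<^sub>R f) h = a * ip f h"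
  by (simp add: ip_inner)

lemma ip_uminus_left:
  fixes f h :: "real^'g"
  shows "ip (- f) h = - ip f h"
  by (simp add: ip_inner)

lemma abs_ip_le_norm_mult:
  fixes f g :: "real^'g"
  shows "\<bar>ip f g\<bar> \<le> norm f * norm g"
proof -
  have "\<bar>ip f g\<bar> \<le> \<bar>inner f g\<bar>"
    by (simp add: ip_inner abs_divide divide_le_eq mult_le_cancel_left1)
  also have "\<dots> \<le> norm f * norm g"
    by (rule Cauchy_Schwarz_ineq2)
  finally show ?thesis .
qed

lemma convex_on_subadditive_homogeneous:
  fixes f :: "'a::real_vector \<Rightarrow> real"
  assumes add: "\<And>x y. f (x + y) \<le> f x + f y"
    and scale: "\<And>a x. a \<ge> 0 \<Longrightarrow> f (a *\<^sub>R x) \<le> a * f x"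
  shows "convex_on UNIV f"
  unfolding convex_on_def
  by (metis add scale add_mono convex_UNIV order_trans)

lemma is_norm_bounded_below:
  assumes "is_norm N"
  shows "\<exists>k>0. \<forall>x. k * norm x \<le> N x"
proof -
  have pos: "x \<noteq> 0 \<Longrightarrow> N x > 0" and hom: "N (a *\<^sub>R x) = \<bar>a\<bar> * N x" for a x
    using assms unfolding is_norm_def by (metis order.not_eq_order_implies_strict)+
  have "convex_on UNIV N"
    using assms unfolding is_norm_def by (intro convex_on_subadditive_homogeneous) auto
  then have "continuous_on (sphere 0 1) N"
    by (meson continuous_on_subset convex_on_continuous open_UNIV subset_UNIV)
  then obtain y where y: "y \<in> sphere 0 1" and ymin: "\<And>z. z \<in> sphere 0 1 \<Longrightarrow> N y \<le> N z"
    using continuous_attains_inf[OF compact_sphere, of 0 1 N] by auto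
  have "N y * norm x \<le> N x" for x
  proof (cases "x = 0")
    case False
    have "N y \<le> N ((1 / norm x) *\<^sub>R x)" using ymin False by simp
    then show ?thesis using False by (simp add: hom field_simps)
  qed (simp add: hom[of 0 0, simplified])
  moreover have "N y > 0" using y by (intro pos) auto
  ultimately show ?thesis by blast
qed

lemma dual_norm_bdd_above:
  assumes "is_norm N"
  shows "bdd_above {\<bar>ip g h\<bar> | h. N h \<le> 1}"
proof -
  obtain k where k: "k > 0" "\<And>x. k * norm x \<le> N x"
    using is_norm_bounded_below[OF assms] by blast
  show ?thesis
  proof (rule bdd_aboveI)
    fix y assume "y \<in> {\<bar>ip g h\<bar> | h. N h \<le> 1}"
    then obtain h where y: "y = \<bar>ip g h\<bar>" and h: "N h \<le> 1" by blast
    have "norm h \<le> 1 / k" using k(2)[of h] h k(1) by (simp add: field_simps)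
    then have "norm g * norm h \<le> norm g / k"
      by (metis mult_left_mono norm_ge_zero times_divide_eq_right mult_1_right)
    then show "y \<le> norm g / k" using abs_ip_le_norm_mult[of g h] y by linarith
  qed
qed

lemma abs_ip_le_dual_norm:
  assumes "is_norm N" and "N h \<le> 1"
  shows "\<bar>ip g h\<bar> \<le> dual_norm N g"
  unfolding dual_norm_def using assms by (intro cSup_upper dual_norm_bdd_above) auto

lemma dual_norm_le:
  assumes "is_norm N" and "\<And>h. N h \<le> 1 \<Longrightarrow> \<bar>ip g h\<bar> \<le> r"
  shows "dual_norm N g \<le> r"
proof -
  have "N 0 = 0" using assms(1) unfolding is_norm_def by blast
  then show ?thesis
    unfolding dual_norm_def using assms(2) by (intro cSup_least) (auto intro: exI[of _ 0])
qed

lemma dual_norm_uminus: "dual_norm N (- g) = dual_norm N g"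
  by (simp add: dual_norm_def ip_uminus_left)

lemma convex_on_dual_norm:
  assumes "is_norm N"
  shows "convex_on UNIV (dual_norm N)"
proof (rule convex_on_subadditive_homogeneous)
  show "dual_norm N (f + g) \<le> dual_norm N f + dual_norm N g" for f g
  proof (rule dual_norm_le[OF assms])
    fix h assume "N h \<le> 1"
    then have "\<bar>ip f h\<bar> \<le> dual_norm N f" "\<bar>ip g h\<bar> \<le> dual_norm N g"
      using abs_ip_le_dual_norm[OF assms] by blast+
    then show "\<bar>ip (f + g) h\<bar> \<le> dual_norm N f + dual_norm N g"
      by (simp add: ip_add_left)
  qed
  show "dual_norm N (a *\<^sub>R f) \<le> a * dual_norm N f" if "a \<ge> 0" for a f
  proof (rule dual_norm_le[OF assms])
    fix h assume "N h \<le> 1"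
    then have "\<bar>ip f h\<bar> \<le> dual_norm N f" using abs_ip_le_dual_norm[OF assms] by blast
    then show "\<bar>ip (a *\<^sub>R f) h\<bar> \<le> a * dual_norm N f"
      using that by (simp add: ip_scaleR_left abs_mult mult_left_mono)
  qed
qed

lemma abs_ip_le_bac_norm:
  assumes "bounded (D ` F)" and "f \<in> F"
  shows "\<bar>ip g (D f)\<bar> \<le> bac_norm F D g"
proof -
  obtain R where R: "\<And>f. f \<in> F \<Longrightarrow> norm (D f) \<le> R"
    using assms(1) unfolding bounded_iff by blast
  have "bdd_above ((\<lambda>f. \<bar>ip g (D f)\<bar>) ` F)"
  proof (rule bdd_aboveI2)
    fix f assume "f \<in> F"
    then have "norm g * norm (D f) \<le> norm g * R" by (simp add: R mult_left_mono)
    then show "\<bar>ip g (D f)\<bar> \<le> norm g * R" using abs_ip_le_norm_mult[of g "D f"] by linarith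
  qed
  then show ?thesis unfolding bac_norm_def using assms(2) by (rule cSUP_upper2) simp
qed

lemma bac_norm_le:
  assumes "F \<noteq> {}" and "\<And>f. f \<in> F \<Longrightarrow> \<bar>ip g (D f)\<bar> \<le> r"
  shows "bac_norm F D g \<le> r"
  unfolding bac_norm_def using assms by (rule cSUP_least)

lemma is_norm_bac_norm:
  assumes bdd: "bounded (D ` F)" and spans: "span (D ` F) = UNIV"
  shows "is_norm (bac_norm F D)"
proof -
  have "F \<noteq> {}" using spans by auto
  then obtain f0 where f0: "f0 \<in> F" by blast
  note upper = abs_ip_le_bac_norm[OF bdd] and least = bac_norm_le[OF \<open>F \<noteq> {}\<close>]
  have nonneg: "bac_norm F D g \<ge> 0" for g
    using upper[OF f0, of g] by linarith
  have scale_le: "bac_norm F D (a *\<^sub>R g) \<le> \<bar>a\<bar> * bac_norm F D g" for a g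
    using upper by (intro least) (simp add: ip_scaleR_left abs_mult mult_left_mono)
  have scale: "bac_norm F D (a *\<^sub>R g) = \<bar>a\<bar> * bac_norm F D g" for a g
  proof (cases "a = 0")
    case True then show ?thesis using scale_le[of 0 g] nonneg[of 0] by simp
  next
    case False
    have "bac_norm F D g \<le> \<bar>1/a\<bar> * bac_norm F D (a *\<^sub>R g)"
      using scale_le[of "1/a" "a *\<^sub>R g"] False by simp
    then show ?thesis using scale_le[of a g] False by (simp add: field_simps)
  qed
  have definite: "g = 0" if "bac_norm F D g = 0" for g
  proof -
    have "ip g (D f) = 0" if "f \<in> F" for f
      using upper[OF that, of g] \<open>bac_norm F D g = 0\<close> by simp
    then have "\<forall>y\<in>D ` F. orthogonal g y"
      by (auto simp: orthogonal_def ip_inner)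
    then have "orthogonal g g" using orthogonal_to_span spans by blast
    then show ?thesis by (simp add: orthogonal_def)
  qed
  have triangle: "bac_norm F D (g + h) \<le> bac_norm F D g + bac_norm F D h" for g h
    using upper[of _ g] upper[of _ h] by (intro least) (smt (verit) ip_add_left)
  show ?thesis
    unfolding is_norm_def using nonneg scale definite triangle scale[of 0 0] by auto
qed

lemma in_convex_hull_if_dual_bac_norm_le_1:
  fixes \<psi> :: "real^'g"
  assumes compact: "compact (D ` F)" and spans: "span (D ` F) = UNIV"
    and \<psi>: "dual_norm (bac_norm F D) \<psi> \<le> 1"
  shows "\<psi> \<in> convex hull (D ` F \<union> uminus ` D ` F)"
proof (rule ccontr)
  let ?A = "D ` F \<union> uminus ` D ` F"
  assume "\<psi> \<notin> convex hull ?A"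
  moreover have "closed (convex hull ?A)"
    using compact by (intro compact_imp_closed compact_convex_hull compact_Un compact_negations)
  ultimately obtain a b where a\<psi>: "inner a \<psi> < b" and a_hull: "\<forall>x\<in>convex hull ?A. b < inner a x"
    using separating_hyperplane_closed_point[OF convex_convex_hull] by blast
  have "F \<noteq> {}" using spans by auto
  then obtain f0 where "f0 \<in> F" by blast
  then have "(1/2) *\<^sub>R D f0 + (1/2) *\<^sub>R (- D f0) \<in> convex hull ?A"
    by (intro convexD convex_convex_hull hull_inc) auto
  then have "b < 0" using a_hull by auto
  define h where "h = (real CARD('g) / b) *\<^sub>R a"
  have "bac_norm F D h \<le> 1"
  proof (rule bac_norm_le[OF \<open>F \<noteq> {}\<close>])
    fix f assume "f \<in> F"
    then have "b < inner a (D f)" "b < inner a (- D f)"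
      using a_hull hull_inc by (metis UnI1 UnI2 image_eqI)+
    then have "\<bar>inner a (D f)\<bar> \<le> - b" by (simp add: inner_minus_right)
    then show "\<bar>ip h (D f)\<bar> \<le> 1"
      using \<open>b < 0\<close> by (simp add: h_def ip_inner abs_divide le_divide_eq)
  qed
  then have "\<bar>ip \<psi> h\<bar> \<le> 1"
    using abs_ip_le_dual_norm[OF is_norm_bac_norm[OF compact_imp_bounded[OF compact] spans]] \<psi>
    by (meson order_trans)
  moreover have "ip \<psi> h = inner a \<psi> / b" by (simp add: h_def ip_inner inner_commute)
  ultimately show False using a\<psi> \<open>b < 0\<close> by (simp add: abs_divide divide_le_eq)
qed

definition nfold_products :: "'a::comm_monoid_mult set \<Rightarrow> nat \<Rightarrow> 'a set" where
  "nfold_products A n = {\<Prod>i<n. a i | a. \<forall>i<n. a i \<in> A}"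

lemma nfold_products_0: "nfold_products A 0 = {1}"
  by (simp add: nfold_products_def)

lemma mult_mem_nfold_products_Suc:
  assumes "p \<in> nfold_products A n" and "x \<in> A"
  shows "p * x \<in> nfold_products A (Suc n)"
proof -
  obtain a where p: "p = (\<Prod>i<n. a i)" and a: "\<forall>i<n. a i \<in> A"
    using assms(1) unfolding nfold_products_def by blast
  have "(\<Prod>i<Suc n. (a(n := x)) i) = p * x"
    by (simp add: p)
  moreover have "\<forall>i<Suc n. (a(n := x)) i \<in> A" using a assms(2) by (simp add: less_Suc_eq)
  ultimately show ?thesis unfolding nfold_products_def by (auto intro!: exI[of _ "a(n := x)"])
qed

lemma mult_mem_convex_hull_times:
  fixes x y :: "'a::real_algebra"
  assumes x: "x \<in> convex hull S" and y: "y \<in> convex hull T"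
  shows "x * y \<in> convex hull {s * t | s t. s \<in> S \<and> t \<in> T}"
proof -
  let ?P = "convex hull {s * t | s t. s \<in> S \<and> t \<in> T}"
  have linear_left: "linear (\<lambda>u. u * v)" and linear_right: "linear (\<lambda>u. v * u)" for v :: 'a
    by (auto intro!: linearI simp: distrib_left distrib_right)
  have "s * y \<in> ?P" if "s \<in> S" for s
  proof -
    have "s * y \<in> convex hull ((\<lambda>t. s * t) ` T)"
      using y convex_hull_linear_image[OF linear_right] by blast
    also have "\<dots> \<subseteq> ?P" using that by (intro hull_mono) blast
    finally show ?thesis .
  qed
  then have "(\<lambda>s. s * y) ` S \<subseteq> ?P" by blast
  then have "convex hull ((\<lambda>s. s * y) ` S) \<subseteq> ?P"
    by (intro hull_minimal convex_convex_hull)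
  moreover have "x * y \<in> convex hull ((\<lambda>s. s * y) ` S)"
    using x convex_hull_linear_image[OF linear_left] by blast
  ultimately show ?thesis by blast
qed

lemma power_mem_convex_hull_nfold_products:
  fixes x :: "'a::{real_algebra_1, comm_monoid_mult}"
  assumes x: "x \<in> convex hull A"
  shows "x ^ n \<in> convex hull nfold_products A n"
proof (induction n)
  case 0
  show ?case by (simp add: nfold_products_0 hull_inc)
next
  case (Suc n)
  have "x ^ Suc n \<in> convex hull {p * a | p a. p \<in> nfold_products A n \<and> a \<in> A}"
    unfolding power_Suc2 by (rule mult_mem_convex_hull_times[OF Suc.IH x])
  also have "\<dots> \<subseteq> convex hull nfold_products A (Suc n)"
    by (intro hull_mono) (auto intro: mult_mem_nfold_products_Suc)
  finally show ?case .
qed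

lemma prod_eq_or_eq_uminus_prod:
  fixes a b :: "nat \<Rightarrow> 'a::{ring_1, comm_monoid_mult}"
  assumes "\<forall>i<n. a i = b i \<or> a i = - b i"
  shows "(\<Prod>i<n. a i) = (\<Prod>i<n. b i) \<or> (\<Prod>i<n. a i) = - (\<Prod>i<n. b i)"
  using assms
proof (induction n)
  case (Suc n)
  then have "(\<Prod>i<n. a i) = (\<Prod>i<n. b i) \<or> (\<Prod>i<n. a i) = - (\<Prod>i<n. b i)"
    and "a n = b n \<or> a n = - b n" by simp_all
  then show ?case by auto
qed simp

lemma vec_prod_component: "(\<Prod>i\<in>I. v i) $ x = (\<Prod>i\<in>I. v i $ x)"
  by (induction I rule: infinite_finite_induct) simp_all

lemma ppow_eq_power: "ppow \<psi> m = \<psi> ^ m"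
proof -
  have "(\<psi> ^ m) $ x = (\<psi> $ x) ^ m" for x
    by (induction m) simp_all
  then show ?thesis by (simp add: ppow_def vec_eq_iff)
qed

lemma dual_norm_le_on_signed_nfold_products:
  assumes bound: "\<And>fs. \<forall>i<m. fs i \<in> F \<Longrightarrow> dual_norm N (\<Prod>i<m. D (fs i)) \<le> r"
    and p_mem: "p \<in> nfold_products (D ` F \<union> uminus ` D ` F) m"
  shows "dual_norm N p \<le> r"
proof -
  obtain a where p: "p = (\<Prod>i<m. a i)" and a: "\<forall>i<m. a i \<in> D ` F \<union> uminus ` D ` F"
    using p_mem unfolding nfold_products_def by blast
  have "\<forall>i<m. \<exists>f. f \<in> F \<and> (a i = D f \<or> a i = - D f)" using a by blast
  then obtain fs where fs: "\<forall>i<m. fs i \<in> F \<and> (a i = D (fs i) \<or> a i = - D (fs i))"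
    by metis
  then have "p = (\<Prod>i<m. D (fs i)) \<or> p = - (\<Prod>i<m. D (fs i))"
    unfolding p by (intro prod_eq_or_eq_uminus_prod) blast
  moreover have "dual_norm N (\<Prod>i<m. D (fs i)) \<le> r" using fs bound by blast
  ultimately show ?thesis by (auto simp: dual_norm_uminus)
qed

theorem mainTheorem16:
  fixes N :: "real^'g \<Rightarrow> real" and F :: "(real^'g) set"
    and c :: "real \<Rightarrow> real" and C :: "nat \<Rightarrow> real" and D :: "real^'g \<Rightarrow> real^'g"
    and \<psi> :: "real^'g" and m :: nat
  assumes "is_norm N" and "convex F" and "compact F"
    and "quasi_algebra_predual N F c C D"
    and "dual_norm (bac_norm F D) \<psi> \<le> 1"
    and "m \<ge> 1"
  shows "dual_norm N (ppow \<psi> m) \<le> C m"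
proof -
  have "(\<chi> x. \<Prod>i<m. D (fs i) $ x) = (\<Prod>i<m. D (fs i))" for fs
    by (simp add: vec_eq_iff vec_prod_component)
  then have products_bound: "\<And>fs. \<forall>i<m. fs i \<in> F \<Longrightarrow> dual_norm N (\<Prod>i<m. D (fs i)) \<le> C m"
    and DF: "compact (D ` F)" "span (D ` F) = UNIV"
    using assms(4,6) unfolding quasi_algebra_predual_def by auto
  have "\<psi> ^ m \<in> convex hull nfold_products (D ` F \<union> uminus ` D ` F) m"
    using in_convex_hull_if_dual_bac_norm_le_1[OF DF assms(5)]
    by (rule power_mem_convex_hull_nfold_products)
  moreover have "\<forall>p \<in> nfold_products (D ` F \<union> uminus ` D ` F) m. dual_norm N p \<le> C m"
    by (intro ballI dual_norm_le_on_signed_nfold_products[OF products_bound])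
  ultimately have "dual_norm N (\<psi> ^ m) \<le> C m"
    using convex_on_convex_hull_bound convex_on_subset[OF convex_on_dual_norm[OF assms(1)]] by blast
  then show ?thesis by (simp add: ppow_eq_power)
qed

end
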